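(* Let $P$ be a poset and $X$ an antichain of $P$. The following are equivalent: (i) $X$ is the minimum of $AM(P)$; (ii) $X$ is a minimal element of $AM(P)$; (iii) $P=\uparrow X$.
   Context: $AM(P)$ is the set of maximal antichains of $P$ ordered by domination: $Y\leq Z$ iff for every $y\in Y$ there is $z\in Z$ with $y\leq z$. $\uparrow X=\{y\in P: x\leq y\text{ for some }x\in X\}$. *)

theory Defs
  imports Main
begin

text \<open>A poset is a carrier set P inside a type with a partial order (class order);
  the order on P is the restriction of the type's order.\<close>

definition antichain :: "'a::order set \<Rightarrow> 'a set \<Rightarrow> bool" where
  "antichain P X \<longleftrightarrow> X \<subseteq> P \<and> (\<forall>x\<in>X. \<forall>y\<in>X. x \<le> y \<longrightarrow> x = y)"

definition maximal_antichain :: "'a::order set \<Rightarrow> 'a set \<Rightarrow> bool" where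
  "maximal_antichain P X \<longleftrightarrow> antichain P X \<and> (\<forall>Y. antichain P Y \<and> X \<subseteq> Y \<longrightarrow> Y = X)"

definition AM :: "'a::order set \<Rightarrow> 'a set set" where
  "AM P = {X. maximal_antichain P X}"

definition dom_le :: "'a::order set \<Rightarrow> 'a set \<Rightarrow> bool" where
  "dom_le Y Z \<longleftrightarrow> (\<forall>y\<in>Y. \<exists>z\<in>Z. y \<le> z)"

definition up_set :: "'a::order set \<Rightarrow> 'a set \<Rightarrow> 'a set" where
  "up_set P X = {y\<in>P. \<exists>x\<in>X. x \<le> y}"

end

theory Submission
  imports Defs
begin

text \<open>An antichain is maximal iff every element of P is comparable with one of its elements.
  Minimality of the maximal antichains X with P = \<up>X is then direct: every element of another
  maximal antichain Y lies above some x \<in> X, and an element of X comparable with some y \<in> Y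
  must lie below it. Conversely, if some p \<in> P is not above X, choose (by Zorn) a maximal
  antichain M of P - \<up>X; its elements lie strictly below X, and gluing M to the elements
  of X not above M gives a maximal antichain of P strictly dominated by X.\<close>

lemma antichain_subset: "antichain P X \<Longrightarrow> X \<subseteq> P"
  unfolding antichain_def by simp

lemma antichain_eq: "antichain P X \<Longrightarrow> x \<in> X \<Longrightarrow> y \<in> X \<Longrightarrow> x \<le> y \<Longrightarrow> x = y"
  unfolding antichain_def by simp

lemma maximal_antichain_iff_comparable:
  "maximal_antichain P X \<longleftrightarrow> antichain P X \<and> (\<forall>q\<in>P. \<exists>x\<in>X. x \<le> q \<or> q \<le> x)"
proof
  assume max: "maximal_antichain P X"
  have "\<exists>x\<in>X. x \<le> q \<or> q \<le> x" if "q \<in> P" for q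
  proof (rule ccontr)
    assume incomparable: "\<not> ?thesis"
    with max \<open>q \<in> P\<close> have "antichain P (insert q X)"
      unfolding maximal_antichain_def antichain_def by auto
    with max have "insert q X = X"
      unfolding maximal_antichain_def by blast
    with incomparable show False by auto
  qed
  with max show "antichain P X \<and> (\<forall>q\<in>P. \<exists>x\<in>X. x \<le> q \<or> q \<le> x)"
    unfolding maximal_antichain_def by blast
next
  assume X: "antichain P X \<and> (\<forall>q\<in>P. \<exists>x\<in>X. x \<le> q \<or> q \<le> x)"
  have "Y \<subseteq> X" if "antichain P Y" "X \<subseteq> Y" for Y
  proof
    fix y assume "y \<in> Y"
    with X that obtain x where "x \<in> X" "x \<le> y \<or> y \<le> x"
      using antichain_subset by blast
    with \<open>y \<in> Y\<close> that have "x = y"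
      by (metis antichain_eq subsetD)
    with \<open>x \<in> X\<close> show "y \<in> X" by simp
  qed
  with X show "maximal_antichain P X"
    unfolding maximal_antichain_def by blast
qed

lemma ex_maximal_antichain: "\<exists>M. maximal_antichain D M"
proof -
  have "\<Union>C \<in> Collect (antichain D)" if chain: "subset.chain (Collect (antichain D)) C" for C
  proof -
    have "x = y" if "A \<in> C" "B \<in> C" "x \<in> A" "y \<in> B" "x \<le> y" for A B x y
    proof -
      have "A \<subseteq> B \<or> B \<subseteq> A" "antichain D A" "antichain D B"
        using chain \<open>A \<in> C\<close> \<open>B \<in> C\<close> unfolding subset_chain_def by auto
      with that show ?thesis by (metis antichain_eq subsetD)
    qed
    moreover have "\<Union>C \<subseteq> D"
      using chain antichain_subset unfolding subset_chain_def by blast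
    ultimately show ?thesis unfolding antichain_def by blast
  qed
  from subset_Zorn'[OF this] show ?thesis
    unfolding maximal_antichain_def by blast
qed

lemma dom_le_antisym:
  assumes "antichain P Y" "antichain P Z" "dom_le Y Z" "dom_le Z Y"
  shows "Y = Z"
proof -
  have "A \<subseteq> B" if "antichain P A" "dom_le A B" "dom_le B A" for A B
  proof
    fix a assume "a \<in> A"
    with that obtain b a' where "b \<in> B" "a \<le> b" "a' \<in> A" "b \<le> a'"
      unfolding dom_le_def by blast
    with \<open>a \<in> A\<close> \<open>antichain P A\<close> have "a = b"
      by (metis antichain_eq order_antisym order_trans)
    with \<open>b \<in> B\<close> show "a \<in> B" by simp
  qed
  with assms show ?thesis by blast
qed

lemma maximal_antichain_if_up_set_eq:
  assumes "antichain P X" "up_set P X = P"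
  shows "maximal_antichain P X"
  using assms unfolding maximal_antichain_iff_comparable up_set_def by blast

lemma dom_le_if_up_set_eq:
  assumes X: "antichain P X" "up_set P X = P" and Y: "maximal_antichain P Y"
  shows "dom_le X Y"
  unfolding dom_le_def
proof
  fix x assume "x \<in> X"
  with X Y obtain y where y: "y \<in> Y" "x \<le> y \<or> y \<le> x"
    unfolding maximal_antichain_iff_comparable using antichain_subset by blast
  show "\<exists>y\<in>Y. x \<le> y"
  proof (cases "x \<le> y")
    case False
    have "y \<in> P"
      using Y \<open>y \<in> Y\<close> antichain_subset unfolding maximal_antichain_def by blast
    with X(2) obtain x' where "x' \<in> X" "x' \<le> y"
      unfolding up_set_def by blast
    with False y \<open>x \<in> X\<close> X(1) show ?thesis
      by (metis antichain_eq order_trans)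
  qed (use y in blast)
qed

lemma antichain_glue:
  assumes X: "antichain P X" and M: "antichain (P - up_set P X) M"
  shows "antichain P (M \<union> {x\<in>X. \<forall>m\<in>M. \<not> m \<le> x})"
  unfolding antichain_def
proof (intro conjI ballI impI)
  have M_sub: "M \<subseteq> P - up_set P X" using M by (rule antichain_subset)
  with antichain_subset[OF X] show "M \<union> {x\<in>X. \<forall>m\<in>M. \<not> m \<le> x} \<subseteq> P" by blast
  fix a b
  assume "a \<in> M \<union> {x\<in>X. \<forall>m\<in>M. \<not> m \<le> x}" "b \<in> M \<union> {x\<in>X. \<forall>m\<in>M. \<not> m \<le> x}" "a \<le> b"
  then consider "a \<in> M" "b \<in> M" | "a \<in> M" "\<forall>m\<in>M. \<not> m \<le> b" | "a \<in> X" "b \<in> M"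
    | "a \<in> X" "b \<in> X"
    by blast
  then show "a = b"
  proof cases
    case 1 with M \<open>a \<le> b\<close> show ?thesis by (meson antichain_eq)
  next
    case 2 with \<open>a \<le> b\<close> show ?thesis by blast
  next
    case 3 with M_sub \<open>a \<le> b\<close> show ?thesis unfolding up_set_def by blast
  next
    case 4 with X \<open>a \<le> b\<close> show ?thesis by (meson antichain_eq)
  qed
qed

lemma maximal_antichain_glue:
  assumes X: "antichain P X" and M: "maximal_antichain (P - up_set P X) M"
  shows "maximal_antichain P (M \<union> {x\<in>X. \<forall>m\<in>M. \<not> m \<le> x})"
    (is "maximal_antichain P ?Y")
proof -
  have M_comparable: "\<forall>q\<in>P - up_set P X. \<exists>m\<in>M. m \<le> q \<or> q \<le> m"
    using M unfolding maximal_antichain_iff_comparable by blast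
  have "\<exists>y\<in>?Y. y \<le> q \<or> q \<le> y" if "q \<in> P" for q
  proof (cases "q \<in> up_set P X")
    case True
    then obtain x where "x \<in> X" "x \<le> q" unfolding up_set_def by blast
    then show ?thesis by (auto intro: order_trans)
  qed (use M_comparable \<open>q \<in> P\<close> in blast)
  with antichain_glue[OF X] M show ?thesis
    unfolding maximal_antichain_iff_comparable by blast
qed

lemma strictly_dominated_if_up_set_ne:
  assumes X: "maximal_antichain P X" and "up_set P X \<noteq> P"
  obtains Y where "maximal_antichain P Y" "dom_le Y X" "Y \<noteq> X"
proof -
  define D where "D = P - up_set P X"
  obtain M where M: "maximal_antichain D M" using ex_maximal_antichain by blast
  define Y where "Y = M \<union> {x\<in>X. \<forall>m\<in>M. \<not> m \<le> x}"
  have X_antichain: "antichain P X" and X_comparable: "\<forall>q\<in>P. \<exists>x\<in>X. x \<le> q \<or> q \<le> x"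
    using X unfolding maximal_antichain_iff_comparable by blast+
  have "M \<subseteq> D" "\<forall>q\<in>D. \<exists>m\<in>M. m \<le> q \<or> q \<le> m"
    using M antichain_subset unfolding maximal_antichain_iff_comparable by blast+
  moreover have "D \<noteq> {}"
    using \<open>up_set P X \<noteq> P\<close> unfolding D_def up_set_def by blast
  ultimately obtain m where "m \<in> M" "m \<in> D" by blast
  have "maximal_antichain P Y"
    using maximal_antichain_glue[OF X_antichain] M unfolding D_def Y_def by blast
  moreover have "dom_le Y X"
    unfolding dom_le_def
  proof
    fix y assume "y \<in> Y"
    show "\<exists>x\<in>X. y \<le> x"
    proof (cases "y \<in> M")
      case True
      with \<open>M \<subseteq> D\<close> have "y \<in> P" "y \<notin> up_set P X" unfolding D_def by auto
      with X_comparable show ?thesis unfolding up_set_def by blast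
    qed (use \<open>y \<in> Y\<close> Y_def in auto)
  qed
  moreover have "Y \<noteq> X"
    using \<open>m \<in> M\<close> \<open>m \<in> D\<close> unfolding Y_def D_def up_set_def by blast
  ultimately show thesis using that by blast
qed

theorem lemma5p1:
  fixes P X :: "'a::order set"
  assumes "antichain P X"
  shows "((X \<in> AM P \<and> (\<forall>Y\<in>AM P. dom_le X Y))
          \<longleftrightarrow> (X \<in> AM P \<and> (\<forall>Y\<in>AM P. dom_le Y X \<longrightarrow> Y = X)))
       \<and> ((X \<in> AM P \<and> (\<forall>Y\<in>AM P. dom_le Y X \<longrightarrow> Y = X))
          \<longleftrightarrow> P = up_set P X)"
proof -
  have minimum_imp_minimal: "\<forall>Y\<in>AM P. dom_le Y X \<longrightarrow> Y = X"
    if "X \<in> AM P" "\<forall>Y\<in>AM P. dom_le X Y"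
    using that dom_le_antisym unfolding AM_def maximal_antichain_def by blast
  have minimal_imp_covering: "up_set P X = P"
    if "X \<in> AM P" "\<forall>Y\<in>AM P. dom_le Y X \<longrightarrow> Y = X"
    using that strictly_dominated_if_up_set_ne unfolding AM_def by blast
  have covering_imp_minimum: "X \<in> AM P \<and> (\<forall>Y\<in>AM P. dom_le X Y)"
    if "up_set P X = P"
    using that assms maximal_antichain_if_up_set_eq dom_le_if_up_set_eq unfolding AM_def by blast
  show ?thesis
    using minimum_imp_minimal minimal_imp_covering covering_imp_minimum by blast
qed

end
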